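(* Suppose the distribution $\mathcal{D}$ on $\mathbb{R}^d$ has $(r,\alpha,\gamma)$ margins, and $\mathcal{D}'$ is a distribution on $\mathbb{R}^d$ with $\mathrm{TV}(\mathcal{D},\mathcal{D}')\le\theta$. If $\theta\le\frac12\inf_{\beta\ne0}\Pr_{e\sim\mathcal{D}}[\beta\cdot e>r\|\beta\|+\alpha\|\beta\|]$, then $\mathcal{D}'$ has $(r,\alpha,\gamma/4)$ margins.
   Context: $\mathrm{TV}$ denotes total variation distance. A distribution $\mathcal{D}$ on $\mathbb{R}^d$ has $(r,\alpha,\gamma)$ margins if for all $\beta\ne0$ and all $b\le r\|\beta\|$, with $e\sim\mathcal{D}$, $\Pr[\beta\cdot e>b+\alpha\|\beta\|\mid\beta\cdot e\ge b]\ge\gamma$. *)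

theory Defs
  imports "HOL-Probability.Probability"
begin

definition tv_dist :: "'a measure \<Rightarrow> 'a measure \<Rightarrow> real" where
  "tv_dist M N = (SUP A \<in> sets M. \<bar>measure M A - measure N A\<bar>)"

definition cond_prob :: "'a measure \<Rightarrow> 'a set \<Rightarrow> 'a set \<Rightarrow> real" where
  "cond_prob M A B = measure M (A \<inter> B) / measure M B"

text \<open>(r, alpha, gamma) margins. The conditional probability is only required
  when the conditioning event has positive probability.\<close>
definition has_margins :: "'a::euclidean_space measure \<Rightarrow> real \<Rightarrow> real \<Rightarrow> real \<Rightarrow> bool" where
  "has_margins D r \<alpha> \<gamma> \<longleftrightarrow>
     (\<forall>\<beta> b. \<beta> \<noteq> 0 \<and> b \<le> r * norm \<beta> \<and> measure D {e \<in> space D. \<beta> \<bullet> e \<ge> b} > 0 \<longrightarrow>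
        cond_prob D {e \<in> space D. \<beta> \<bullet> e > b + \<alpha> * norm \<beta>} {e \<in> space D. \<beta> \<bullet> e \<ge> b} \<ge> \<gamma>)"

end

theory Submission
  imports Defs
begin

text \<open>Write \<open>B = {\<beta> \<bullet> e \<ge> b}\<close> and \<open>A = {\<beta> \<bullet> e > b + \<alpha> \<parallel>\<beta>\<parallel>}\<close>. For \<open>\<alpha> \<ge> 0\<close> the event
  \<open>{\<beta> \<bullet> e > (r + \<alpha>) \<parallel>\<beta>\<parallel>}\<close> lies in \<open>A \<inter> B\<close>, so both \<open>A \<inter> B\<close> and \<open>B\<close> have
  \<open>D\<close>-probability at least \<open>2\<theta>\<close>. A perturbation by \<open>\<theta>\<close> then changes each of them by at most
  a factor 2, so the conditional probability drops by at most a factor 4. For \<open>\<alpha> < 0\<close> we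
  have \<open>A \<supseteq> B\<close>, and the claim reduces to \<open>\<gamma> \<le> 1\<close>, which holds for every distribution with
  margins.\<close>

lemma measure_diff_le_tv_dist:
  assumes "prob_space M" "prob_space N" "A \<in> sets M"
  shows "\<bar>measure M A - measure N A\<bar> \<le> tv_dist M N"
proof -
  have "bdd_above ((\<lambda>A. \<bar>measure M A - measure N A\<bar>) ` sets M)"
  proof (rule bdd_aboveI2)
    fix A
    show "\<bar>measure M A - measure N A\<bar> \<le> 1"
      using prob_space.prob_le_1[OF assms(1), of A] prob_space.prob_le_1[OF assms(2), of A]
        measure_nonneg[of M A] measure_nonneg[of N A]
      by linarith
  qed
  then show ?thesis
    unfolding tv_dist_def by (rule cSUP_upper[OF assms(3)])
qed

lemma cond_prob_le_1:
  assumes "finite_measure M"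
  shows "cond_prob M A B \<le> 1"
proof (cases "B \<in> sets M")
  case True
  then have "measure M (A \<inter> B) \<le> measure M B"
    by (intro finite_measure.finite_measure_mono[OF assms]) auto
  then show ?thesis
    unfolding cond_prob_def by (auto simp: divide_le_eq_1 less_le)
next
  case False
  then show ?thesis
    unfolding cond_prob_def by (simp add: measure_notin_sets)
qed

text \<open>Some half-space \<open>{\<beta> \<bullet> e \<ge> r \<parallel>\<beta>\<parallel> - n}\<close> has positive probability, since these
  half-spaces exhaust the whole space.\<close>

lemma has_margins_le_1:
  fixes D :: "'a::euclidean_space measure"
  assumes "prob_space D" "sets D = sets borel" "has_margins D r \<alpha> \<gamma>"
  shows "\<gamma> \<le> 1"
proof -
  interpret prob_space D by fact
  obtain \<beta> :: 'a where "\<beta> \<noteq> 0"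
    using nonzero_Basis by blast
  define H where "H n = {e \<in> space D. r * norm \<beta> - real n \<le> \<beta> \<bullet> e}" for n
  have H_sets: "H n \<in> sets D" for n
    unfolding H_def using assms(2) by measurable
  have "(\<Union>n. H n) = space D"
  proof (intro equalityI subsetI)
    fix e assume "e \<in> space D"
    obtain n where "r * norm \<beta> - \<beta> \<bullet> e \<le> real n"
      using real_arch_simple by blast
    with \<open>e \<in> space D\<close> show "e \<in> (\<Union>n. H n)"
      unfolding H_def by (auto simp: algebra_simps)
  qed (auto simp: H_def)
  moreover have "space D \<notin> null_sets D"
    by (simp add: null_sets_def emeasure_space_1)
  ultimately obtain n where "H n \<notin> null_sets D"
    using null_sets_UN[of H D] by metis
  then have "measure D (H n) > 0"
    using H_sets by (auto simp: null_sets_def emeasure_eq_measure less_le)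
  moreover have "r * norm \<beta> - real n \<le> r * norm \<beta>"
    by simp
  ultimately have "\<gamma> \<le> cond_prob D {e \<in> space D. \<beta> \<bullet> e > r * norm \<beta> - real n + \<alpha> * norm \<beta>} (H n)"
    using assms(3) \<open>\<beta> \<noteq> 0\<close> unfolding has_margins_def H_def by blast
  also have "\<dots> \<le> 1"
    by (rule cond_prob_le_1) unfold_locales
  finally show ?thesis .
qed

lemma cond_prob_lower_bound_tv_dist:
  assumes "prob_space M" "prob_space N" "sets N = sets M"
    and "A \<in> sets M" "B \<in> sets M"
    and "tv_dist M N \<le> \<theta>" "2 * \<theta> \<le> measure M (A \<inter> B)" "measure N B > 0"
    and "measure M B > 0 \<Longrightarrow> \<gamma> \<le> cond_prob M A B"
  shows "\<gamma> / 4 \<le> cond_prob N A B"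
proof -
  interpret M: prob_space M by fact
  have AB: "A \<inter> B \<in> sets M"
    using assms(4,5) by auto
  have tv_B: "\<bar>measure M B - measure N B\<bar> \<le> \<theta>"
    using measure_diff_le_tv_dist[OF assms(1,2,5)] assms(6) by linarith
  have tv_AB: "\<bar>measure M (A \<inter> B) - measure N (A \<inter> B)\<bar> \<le> \<theta>"
    using measure_diff_le_tv_dist[OF assms(1,2) AB] assms(6) by linarith
  have mono: "measure M (A \<inter> B) \<le> measure M B"
    using assms(5) by (intro M.finite_measure_mono) auto
  have M_B_pos: "measure M B > 0"
    using tv_B mono assms(7,8) by linarith
  show ?thesis
  proof (cases "\<gamma> \<ge> 0")
    case True
    have "\<gamma> * measure M B \<le> measure M (A \<inter> B)"
      using assms(9)[OF M_B_pos] M_B_pos unfolding cond_prob_def by (simp add: field_simps)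
    moreover have "measure N B \<le> 2 * measure M B"
      using tv_B mono assms(7) by linarith
    moreover have "measure M (A \<inter> B) \<le> 2 * measure N (A \<inter> B)"
      using tv_AB assms(7) by linarith
    ultimately have "\<gamma> * measure N B \<le> 4 * measure N (A \<inter> B)"
      using mult_left_mono[of "measure N B" "2 * measure M B" \<gamma>] True by linarith
    then show ?thesis
      using assms(8) unfolding cond_prob_def by (simp add: field_simps)
  next
    case False
    then show ?thesis
      unfolding cond_prob_def by (simp add: order_trans[of _ 0])
  qed
qed

lemma has_margins_neg_alpha:
  assumes "\<alpha> < 0" "\<gamma> \<le> 1"
  shows "has_margins M r \<alpha> \<gamma>"
  unfolding has_margins_def
proof (intro allI impI, elim conjE)
  fix \<beta> :: 'a and b :: real
  assume "\<beta> \<noteq> 0" and pos: "measure M {e \<in> space M. b \<le> \<beta> \<bullet> e} > 0"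
  then have "\<alpha> * norm \<beta> < 0"
    using assms(1) by (simp add: mult_neg_pos)
  then have "{e \<in> space M. b + \<alpha> * norm \<beta> < \<beta> \<bullet> e} \<inter> {e \<in> space M. b \<le> \<beta> \<bullet> e}
      = {e \<in> space M. b \<le> \<beta> \<bullet> e}"
    by auto
  then show "\<gamma> \<le> cond_prob M {e \<in> space M. b + \<alpha> * norm \<beta> < \<beta> \<bullet> e} {e \<in> space M. b \<le> \<beta> \<bullet> e}"
    using pos assms(2) unfolding cond_prob_def by simp
qed

lemma measure_tail_le_margin_event:
  fixes M :: "'a::euclidean_space measure"
  assumes "finite_measure M" "sets M = sets borel" "0 \<le> \<alpha>" "b \<le> r * norm \<beta>"
  shows "measure M {e \<in> space M. r * norm \<beta> + \<alpha> * norm \<beta> < \<beta> \<bullet> e}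
    \<le> measure M ({e \<in> space M. b + \<alpha> * norm \<beta> < \<beta> \<bullet> e} \<inter> {e \<in> space M. b \<le> \<beta> \<bullet> e})"
proof (rule finite_measure.finite_measure_mono[OF assms(1)])
  have "0 \<le> \<alpha> * norm \<beta>"
    using assms(3) by simp
  then show "{e \<in> space M. r * norm \<beta> + \<alpha> * norm \<beta> < \<beta> \<bullet> e}
      \<subseteq> {e \<in> space M. b + \<alpha> * norm \<beta> < \<beta> \<bullet> e} \<inter> {e \<in> space M. b \<le> \<beta> \<bullet> e}"
    using assms(4) by auto
  show "{e \<in> space M. b + \<alpha> * norm \<beta> < \<beta> \<bullet> e} \<inter> {e \<in> space M. b \<le> \<beta> \<bullet> e} \<in> sets M"
    using assms(2) by measurable
qed

theorem lemma20:
  fixes D D' :: "'a::euclidean_space measure"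
    and r \<alpha> \<gamma> \<theta> :: real
  assumes "prob_space D" and "sets D = sets borel"
    and "prob_space D'" and "sets D' = sets borel"
    and "has_margins D r \<alpha> \<gamma>"
    and "tv_dist D D' \<le> \<theta>"
    and "\<theta> \<le> (1/2) * (INF \<beta> \<in> - {0}. measure D {e \<in> space D. \<beta> \<bullet> e > r * norm \<beta> + \<alpha> * norm \<beta>})"
  shows "has_margins D' r \<alpha> (\<gamma> / 4)"
proof (cases "\<alpha> \<ge> 0")
  case False
  moreover have "\<gamma> / 4 \<le> 1"
    using has_margins_le_1[OF assms(1,2,5)] by simp
  ultimately show ?thesis
    by (intro has_margins_neg_alpha) simp_all
next
  case True
  interpret D: prob_space D by fact
  have space: "space D' = space D"
    using assms(2,4) by (metis sets_eq_imp_space_eq)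
  have tail_bound: "2 * \<theta> \<le> measure D {e \<in> space D. r * norm \<beta> + \<alpha> * norm \<beta> < \<beta> \<bullet> e}"
    if "\<beta> \<noteq> 0" for \<beta>
  proof -
    have "bdd_below ((\<lambda>\<beta>. measure D {e \<in> space D. \<beta> \<bullet> e > r * norm \<beta> + \<alpha> * norm \<beta>}) ` (- {0}))"
      by (rule bdd_belowI2[where m = 0]) simp
    from cINF_lower[OF this, of \<beta>] show ?thesis
      using assms(7) that by simp
  qed
  show ?thesis
    unfolding has_margins_def space
  proof (intro allI impI, elim conjE)
    fix \<beta> :: 'a and b :: real
    assume margin_pars: "\<beta> \<noteq> 0" "b \<le> r * norm \<beta>"
      and pos: "measure D' {e \<in> space D. b \<le> \<beta> \<bullet> e} > 0"
    show "\<gamma> / 4 \<le> cond_prob D' {e \<in> space D. b + \<alpha> * norm \<beta> < \<beta> \<bullet> e} {e \<in> space D. b \<le> \<beta> \<bullet> e}"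
    proof (rule cond_prob_lower_bound_tv_dist[OF assms(1,3)])
      show "2 * \<theta> \<le> measure D ({e \<in> space D. b + \<alpha> * norm \<beta> < \<beta> \<bullet> e} \<inter> {e \<in> space D. b \<le> \<beta> \<bullet> e})"
        using tail_bound[OF margin_pars(1)]
          measure_tail_le_margin_event[OF D.finite_measure_axioms assms(2) True margin_pars(2)]
        by linarith
      show "measure D {e \<in> space D. b \<le> \<beta> \<bullet> e} > 0 \<Longrightarrow>
          \<gamma> \<le> cond_prob D {e \<in> space D. b + \<alpha> * norm \<beta> < \<beta> \<bullet> e} {e \<in> space D. b \<le> \<beta> \<bullet> e}"
        using assms(5) margin_pars unfolding has_margins_def by blast
    qed (use assms(2,4,6) pos in \<open>simp_all, measurable\<close>)
  qed
qed

end
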